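(* Let $G$ be a graph, $r \ge 1$, $L_S=(s_1,\dots,s_n)$ a subordering of $S \subseteq V(G)$, $v \in V(G)\setminus S$ and $s \in S$. Then $s \notin \mathrm{bp}(G,L_S,v)$ if and only if for all $u \in V(G)$, $$\mathrm{Wreach}_r(G,\mathrm{placebefore}(L_S,s,v),u)=\mathrm{Wreach}_r(G,\mathrm{placeafter}(L_S,s,v),u).$$
   Context: All graphs are finite, undirected, without loops. A path has length equal to its number of vertices minus one. A subordering $L_S$ is a linear ordering of $S\subseteq V(G)$; $\preceq_{L_S}$ means precedes or equal. For a subordering $L_S$ and $u,w\in V(G)$, $u\in\mathrm{Wreach}_r(G,L_S,w)$ iff either $u=w$, or $u\in S$ and there is a path $P$ of length at most $r$ between $u$ and $w$ with $u\preceq_{L_S} x$ for all $x\in V(P)\cap S$. For $L_S=(s_1,\dots,s_n)$ and $v\notin S$: $\mathrm{placeafter}(L_S,s_i,v)=(s_1,\dots,s_i,v,s_{i+1},\dots,s_n)$ and $\mathrm{placebefore}(L_S,s_i,v)=(s_1,\dots,s_{i-1},v,s_i,\dots,s_n)$, both suborderings of $S\cup\{v\}$. A vertex $s\in S$ is a breakpoint of $v$ if $\mathrm{Wreach}_r(G,\mathrm{placebefore}(L_S,s,v),v)\ne\mathrm{Wreach}_r(G,\mathrm{placeafter}(L_S,s,v),v)$; $\mathrm{bp}(G,L_S,v)\subseteq S$ denotes the set of breakpoints of $v$. *)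

theory Defs
  imports Main
begin

definition graph :: "'a set \<Rightarrow> ('a \<Rightarrow> 'a \<Rightarrow> bool) \<Rightarrow> bool" where
  "graph V E \<longleftrightarrow> finite V \<and> (\<forall>x y. E x y \<longrightarrow> x \<in> V \<and> y \<in> V)
     \<and> (\<forall>x y. E x y \<longrightarrow> E y x) \<and> (\<forall>x. \<not> E x x)"

definition is_path :: "'a set \<Rightarrow> ('a \<Rightarrow> 'a \<Rightarrow> bool) \<Rightarrow> 'a list \<Rightarrow> bool" where
  "is_path V E P \<longleftrightarrow> P \<noteq> [] \<and> distinct P \<and> set P \<subseteq> V
     \<and> (\<forall>i. Suc i < length P \<longrightarrow> E (P ! i) (P ! Suc i))"

text \<open>A subordering is a list of distinct vertices; S = set L.
  x precedes-or-equals y in L.\<close>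
definition prec_eq :: "'a list \<Rightarrow> 'a \<Rightarrow> 'a \<Rightarrow> bool" where
  "prec_eq L x y \<longleftrightarrow> (\<exists>i j. i \<le> j \<and> j < length L \<and> L ! i = x \<and> L ! j = y)"

definition wreach :: "'a set \<Rightarrow> ('a \<Rightarrow> 'a \<Rightarrow> bool) \<Rightarrow> nat \<Rightarrow> 'a list \<Rightarrow> 'a \<Rightarrow> 'a set" where
  "wreach V E r L w = {u. u = w \<or>
     (u \<in> set L \<and> (\<exists>P. is_path V E P \<and> hd P = u \<and> last P = w \<and> length P - 1 \<le> r
        \<and> (\<forall>x \<in> set P \<inter> set L. prec_eq L u x)))}"

definition pos :: "'a list \<Rightarrow> 'a \<Rightarrow> nat" where
  "pos L s = length (takeWhile (\<lambda>x. x \<noteq> s) L)"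

definition placeafter :: "'a list \<Rightarrow> 'a \<Rightarrow> 'a \<Rightarrow> 'a list" where
  "placeafter L s v = take (Suc (pos L s)) L @ v # drop (Suc (pos L s)) L"

definition placebefore :: "'a list \<Rightarrow> 'a \<Rightarrow> 'a \<Rightarrow> 'a list" where
  "placebefore L s v = take (pos L s) L @ v # drop (pos L s) L"

definition bp :: "'a set \<Rightarrow> ('a \<Rightarrow> 'a \<Rightarrow> bool) \<Rightarrow> nat \<Rightarrow> 'a list \<Rightarrow> 'a \<Rightarrow> 'a set" where
  "bp V E r L v = {s \<in> set L.
     wreach V E r (placebefore L s v) v \<noteq> wreach V E r (placeafter L s v) v}"

end

theory Submission
  imports Defs
begin

text \<open>Placing \<open>v\<close> immediately before or after \<open>s\<close> yields two orderings that differ by swapping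
  the adjacent pair \<open>v, s\<close>, so they compare every pair of vertices alike except \<open>v\<close> and \<open>s\<close>.
  Hence a vertex weakly reachable from some \<open>u\<close> in one ordering but not in the other must be
  \<open>v\<close> or \<open>s\<close>, reaching \<open>u\<close> along a path through the other one; cutting that path at the
  other one (and reversing it if necessary) shows that \<open>s\<close> is weakly reachable from \<open>v\<close> when
  \<open>s\<close> precedes \<open>v\<close>. This never happens when \<open>v\<close> precedes \<open>s\<close>, so if \<open>s\<close> is not a breakpoint
  of \<open>v\<close> the two orderings have the same weak reachability sets everywhere.\<close>

lemma pos_Cons: "pos (a # xs) x = (if a = x then 0 else Suc (pos xs x))"
  by (simp add: pos_def)

lemma pos_append: "pos (xs @ ys) x = (if x \<in> set xs then pos xs x else length xs + pos ys x)"
  by (induct xs) (simp_all add: pos_def)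

lemma pos_less_length: "x \<in> set xs \<Longrightarrow> pos xs x < length xs"
  by (induct xs) (auto simp: pos_Cons)

lemma nth_pos: "x \<in> set xs \<Longrightarrow> xs ! pos xs x = x"
  by (induct xs) (auto simp: pos_Cons)

lemma pos_nth: "distinct xs \<Longrightarrow> i < length xs \<Longrightarrow> pos xs (xs ! i) = i"
  by (induct xs arbitrary: i) (auto simp: pos_Cons less_Suc_eq_0_disj)

lemma prec_eq_iff_pos:
  assumes "distinct L"
  shows "prec_eq L x y \<longleftrightarrow> x \<in> set L \<and> y \<in> set L \<and> pos L x \<le> pos L y"
proof
  assume "prec_eq L x y"
  then obtain i j where "i \<le> j" "j < length L" "L ! i = x" "L ! j = y"
    unfolding prec_eq_def by blast
  then show "x \<in> set L \<and> y \<in> set L \<and> pos L x \<le> pos L y"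
    using pos_nth[OF assms] by auto
next
  assume "x \<in> set L \<and> y \<in> set L \<and> pos L x \<le> pos L y"
  then show "prec_eq L x y"
    unfolding prec_eq_def using pos_less_length nth_pos by metis
qed

lemma prec_eq_refl: "x \<in> set L \<Longrightarrow> prec_eq L x x"
  by (metis in_set_conv_nth order_refl prec_eq_def)

lemma prec_eq_trans: "distinct L \<Longrightarrow> prec_eq L x y \<Longrightarrow> prec_eq L y z \<Longrightarrow> prec_eq L x z"
  by (auto simp: prec_eq_iff_pos)

lemma prec_eq_adjacent:
  assumes "distinct (A @ x # y # B)"
  shows "prec_eq (A @ x # y # B) x y" and "\<not> prec_eq (A @ x # y # B) y x"
  using assms by (auto simp: prec_eq_iff_pos pos_append pos_Cons)

lemma prec_eq_swap_adjacent:
  assumes "distinct (A @ x # y # B)" and "\<not> (w = x \<and> z = y)" and "\<not> (w = y \<and> z = x)"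
  shows "prec_eq (A @ y # x # B) w z \<longleftrightarrow> prec_eq (A @ x # y # B) w z"
proof -
  have "distinct (A @ y # x # B)" using assms(1) by auto
  then show ?thesis
    using assms by (auto simp: prec_eq_iff_pos pos_append pos_Cons dest: pos_less_length)
qed

lemma is_path_take: "is_path V E P \<Longrightarrow> k < length P \<Longrightarrow> is_path V E (take (Suc k) P)"
  unfolding is_path_def by (auto dest: in_set_takeD)

lemma is_path_rev:
  assumes sym: "\<And>x y. E x y \<Longrightarrow> E y x" and P: "is_path V E P"
  shows "is_path V E (rev P)"
  unfolding is_path_def
proof (intro conjI allI impI)
  show "rev P \<noteq> []" "distinct (rev P)" "set (rev P) \<subseteq> V"
    using P by (auto simp: is_path_def)
  fix i assume i: "Suc i < length (rev P)"
  define j where "j = length P - Suc (Suc i)"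
  have "E (P ! j) (P ! Suc j)" using P i unfolding is_path_def j_def by auto
  moreover have "Suc j = length P - Suc i" using i j_def by auto
  ultimately show "E (rev P ! i) (rev P ! Suc i)" using i sym by (simp add: rev_nth j_def)
qed

lemma wreach_through_path:
  assumes "u \<in> set L" and P: "is_path V E P" "hd P = u" "length P - 1 \<le> r"
    and min: "\<forall>x \<in> set P \<inter> set L. prec_eq L u x" and "w \<in> set P"
  shows "u \<in> wreach V E r L w"
proof -
  obtain k where k: "k < length P" "P ! k = w" using \<open>w \<in> set P\<close> by (meson in_set_conv_nth)
  let ?Q = "take (Suc k) P"
  have "is_path V E ?Q" using is_path_take[OF P(1) k(1)] .
  moreover have "hd ?Q = u" using P(2) by simp
  moreover have "last ?Q = w" "length ?Q - 1 \<le> r"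
    using k P(3) by (simp_all add: take_Suc_conv_app_nth)
  moreover have "\<forall>x \<in> set ?Q \<inter> set L. prec_eq L u x" using min by (auto dest: in_set_takeD)
  ultimately show ?thesis using \<open>u \<in> set L\<close> unfolding wreach_def by blast
qed

lemma not_in_wreach:
  assumes "w \<in> set L" and "\<not> prec_eq L u w"
  shows "u \<notin> wreach V E r L w"
proof
  assume "u \<in> wreach V E r L w"
  moreover have "u \<noteq> w" using assms prec_eq_refl by metis
  ultimately obtain P where "is_path V E P" "last P = w" "\<forall>x \<in> set P \<inter> set L. prec_eq L u x"
    unfolding wreach_def by auto
  then show False using assms by (metis IntI is_path_def last_in_set)
qed

lemma wreach_swap_adjacent_diff:
  assumes dist: "distinct (A @ x # y # B)"
    and u: "u \<in> wreach V E r (A @ x # y # B) w" "u \<notin> wreach V E r (A @ y # x # B) w"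
  shows "u = x \<and> (\<exists>P. is_path V E P \<and> hd P = x \<and> last P = w \<and> length P - 1 \<le> r
    \<and> (\<forall>z \<in> set P \<inter> set (A @ x # y # B). prec_eq (A @ x # y # B) x z) \<and> y \<in> set P)"
proof -
  let ?L1 = "A @ x # y # B" and ?L2 = "A @ y # x # B"
  have sets: "set ?L2 = set ?L1" by auto
  have "u \<noteq> w" "u \<in> set ?L1" using u unfolding wreach_def by auto
  then obtain P where P: "is_path V E P" "hd P = u" "last P = w" "length P - 1 \<le> r"
    "\<forall>z \<in> set P \<inter> set ?L1. prec_eq ?L1 u z"
    using u(1) unfolding wreach_def by auto
  have "\<not> (\<forall>z \<in> set P \<inter> set ?L2. prec_eq ?L2 u z)"
    using u(2) P \<open>u \<in> set ?L1\<close> unfolding wreach_def sets by auto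
  then obtain z where z: "z \<in> set P" "z \<in> set ?L1" "\<not> prec_eq ?L2 u z"
    unfolding sets by auto
  have "u = x \<and> z = y"
    using prec_eq_swap_adjacent[OF dist, of u z] prec_eq_adjacent[OF dist] P(5) z by auto
  then show ?thesis using P z by auto
qed

lemma wreach_swap_adjacent_gain:
  assumes dist: "distinct (A @ x # y # B)"
    and u: "u \<in> wreach V E r (A @ y # x # B) w" "u \<notin> wreach V E r (A @ x # y # B) w"
  shows "y \<in> wreach V E r (A @ y # x # B) x"
proof -
  have "distinct (A @ y # x # B)" using dist by auto
  from wreach_swap_adjacent_diff[OF this u] obtain P where
    "is_path V E P" "hd P = y" "length P - 1 \<le> r"
    "\<forall>z \<in> set P \<inter> set (A @ y # x # B). prec_eq (A @ y # x # B) y z" "x \<in> set P"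
    by blast
  then show ?thesis by (intro wreach_through_path) auto
qed

lemma wreach_swap_adjacent_loss:
  assumes sym: "\<And>a b. E a b \<Longrightarrow> E b a" and dist: "distinct (A @ x # y # B)"
    and u: "u \<in> wreach V E r (A @ x # y # B) w" "u \<notin> wreach V E r (A @ y # x # B) w"
  shows "y \<in> wreach V E r (A @ y # x # B) x"
proof -
  let ?L1 = "A @ x # y # B" and ?L2 = "A @ y # x # B"
  have dist2: "distinct ?L2" using dist by auto
  obtain P where P: "is_path V E P" "hd P = x" "length P - 1 \<le> r"
    "\<forall>z \<in> set P \<inter> set ?L1. prec_eq ?L1 x z" "y \<in> set P"
    using wreach_swap_adjacent_diff[OF dist u] by blast
  obtain k where k: "k < length P" "P ! k = y" using P(5) by (meson in_set_conv_nth)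
  define Q where "Q = rev (take (Suc k) P)"
  have "is_path V E Q" unfolding Q_def using is_path_rev[OF sym is_path_take[OF P(1) k(1)]] .
  moreover have "hd Q = y" "length Q - 1 \<le> r"
    unfolding Q_def using k P(3) by (simp_all add: hd_rev take_Suc_conv_app_nth)
  moreover have "x \<in> set Q"
    unfolding Q_def using P(1,2) hd_in_set[of "take (Suc k) P"] by (simp add: is_path_def)
  moreover have "prec_eq ?L2 y z" if z: "z \<in> set Q \<inter> set ?L2" for z
  proof -
    have "z \<in> set P" using z unfolding Q_def by (auto dest: in_set_takeD)
    show ?thesis
    proof (cases "z = y \<or> z = x")
      case True
      then show ?thesis using prec_eq_adjacent[OF dist2] by (auto intro: prec_eq_refl)
    next
      case False
      then have "prec_eq ?L2 x z"
        using prec_eq_swap_adjacent[OF dist, of x z] P(4) \<open>z \<in> set P\<close> z by auto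
      then show ?thesis using prec_eq_trans[OF dist2] prec_eq_adjacent[OF dist2] by blast
    qed
  qed
  ultimately show ?thesis by (intro wreach_through_path) auto
qed

lemma wreach_swap_adjacent_eq:
  assumes sym: "\<And>a b. E a b \<Longrightarrow> E b a" and dist: "distinct (A @ x # y # B)"
    and eq: "wreach V E r (A @ x # y # B) x = wreach V E r (A @ y # x # B) x"
  shows "wreach V E r (A @ x # y # B) w = wreach V E r (A @ y # x # B) w"
proof -
  have "y \<notin> wreach V E r (A @ x # y # B) x"
    using not_in_wreach[of x "A @ x # y # B" y] prec_eq_adjacent[OF dist] by simp
  then have "y \<notin> wreach V E r (A @ y # x # B) x" using eq by simp
  then show ?thesis
    using wreach_swap_adjacent_gain[OF dist] wreach_swap_adjacent_loss[where E = E, OF sym dist] by blast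
qed

lemma placebefore_placeafter_split:
  assumes "s \<in> set L"
  obtains A B where "L = A @ s # B" "placebefore L s v = A @ v # s # B"
    "placeafter L s v = A @ s # v # B"
proof
  let ?i = "pos L s"
  have i: "?i < length L" "L ! ?i = s" using assms by (simp_all add: pos_less_length nth_pos)
  then show "L = take ?i L @ s # drop (Suc ?i) L" by (metis id_take_nth_drop)
  then show "placebefore L s v = take ?i L @ v # s # drop (Suc ?i) L"
    and "placeafter L s v = take ?i L @ s # v # drop (Suc ?i) L"
    using i unfolding placebefore_def placeafter_def
    by (simp_all add: Cons_nth_drop_Suc[symmetric] take_Suc_conv_app_nth)
qed

theorem lemma4:
  fixes V :: "'a set" and E :: "'a \<Rightarrow> 'a \<Rightarrow> bool" and r :: nat and L :: "'a list"
  assumes "graph V E" and "r \<ge> 1"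
    and "distinct L" and "set L \<subseteq> V"
    and "v \<in> V" and "v \<notin> set L" and "s \<in> set L"
  shows "s \<notin> bp V E r L v \<longleftrightarrow>
    (\<forall>u \<in> V. wreach V E r (placebefore L s v) u = wreach V E r (placeafter L s v) u)"
proof -
  obtain A B where L: "L = A @ s # B" and before: "placebefore L s v = A @ v # s # B"
    and after: "placeafter L s v = A @ s # v # B"
    using placebefore_placeafter_split[OF \<open>s \<in> set L\<close>] .
  have dist: "distinct (A @ v # s # B)" using assms(3,6) L by auto
  have sym: "\<And>a b. E a b \<Longrightarrow> E b a" using assms(1) by (simp add: graph_def)
  have "s \<notin> bp V E r L v \<longleftrightarrow> wreach V E r (A @ v # s # B) v = wreach V E r (A @ s # v # B) v"
    using \<open>s \<in> set L\<close> by (simp add: bp_def before after)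
  also have "\<dots> \<longleftrightarrow> (\<forall>u \<in> V. wreach V E r (A @ v # s # B) u = wreach V E r (A @ s # v # B) u)"
    using wreach_swap_adjacent_eq[where E = E, OF sym dist] \<open>v \<in> V\<close> by blast
  finally show ?thesis unfolding before after .
qed

end
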